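(* Let $\mathbb{F}$ be a field with $\mathrm{char}(\mathbb{F})\neq 2$, and let $L$ be a finite-dimensional pure, nonnilpotent, solvable Lie algebra over $\mathbb{F}$ of breadth $1$. Then $L$ has a basis $\{x,y\}$ such that $[x,y]=x$.
   Context: For $x\in L$, $b(x)=\mathrm{rank}(\mathrm{ad}_x)$ and $b(L)=\max\{b(x)\mid x\in L\}$ is the breadth of $L$. $L$ is pure if it has no abelian ideal as a direct summand; equivalently $Z(L)\subseteq[L,L]$, where $Z(L)$ is the center. *)

theory Defs
  imports Main "HOL.Vector_Spaces"
begin

definition lie_algebra :: "('k::field \<Rightarrow> 'v::ab_group_add \<Rightarrow> 'v) \<Rightarrow> ('v \<Rightarrow> 'v \<Rightarrow> 'v) \<Rightarrow> bool" where
  "lie_algebra sc br \<longleftrightarrow>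
     vector_space sc \<and>
     (\<forall>y. Vector_Spaces.linear sc sc (\<lambda>x. br x y)) \<and>
     (\<forall>x. Vector_Spaces.linear sc sc (\<lambda>y. br x y)) \<and>
     (\<forall>x. br x x = 0) \<and>
     (\<forall>x y z. br x (br y z) + br y (br z x) + br z (br x y) = 0)"

definition finite_dim :: "('k::field \<Rightarrow> 'v::ab_group_add \<Rightarrow> 'v) \<Rightarrow> bool" where
  "finite_dim sc \<longleftrightarrow> (\<exists>B. finite B \<and> module.span sc B = UNIV)"

definition bracket_span :: "('k::field \<Rightarrow> 'v::ab_group_add \<Rightarrow> 'v) \<Rightarrow> ('v \<Rightarrow> 'v \<Rightarrow> 'v) \<Rightarrow> 'v set \<Rightarrow> 'v set \<Rightarrow> 'v set" where
  "bracket_span sc br A B = module.span sc {br a b | a b. a \<in> A \<and> b \<in> B}"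

fun derived_series :: "('k::field \<Rightarrow> 'v::ab_group_add \<Rightarrow> 'v) \<Rightarrow> ('v \<Rightarrow> 'v \<Rightarrow> 'v) \<Rightarrow> nat \<Rightarrow> 'v set" where
  "derived_series sc br 0 = UNIV"
| "derived_series sc br (Suc k) = bracket_span sc br (derived_series sc br k) (derived_series sc br k)"

fun lower_central_series :: "('k::field \<Rightarrow> 'v::ab_group_add \<Rightarrow> 'v) \<Rightarrow> ('v \<Rightarrow> 'v \<Rightarrow> 'v) \<Rightarrow> nat \<Rightarrow> 'v set" where
  "lower_central_series sc br 0 = UNIV"
| "lower_central_series sc br (Suc k) = bracket_span sc br UNIV (lower_central_series sc br k)"

definition solvable_lie :: "('k::field \<Rightarrow> 'v::ab_group_add \<Rightarrow> 'v) \<Rightarrow> ('v \<Rightarrow> 'v \<Rightarrow> 'v) \<Rightarrow> bool" where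
  "solvable_lie sc br \<longleftrightarrow> (\<exists>k. derived_series sc br k = {0})"

definition nilpotent_lie :: "('k::field \<Rightarrow> 'v::ab_group_add \<Rightarrow> 'v) \<Rightarrow> ('v \<Rightarrow> 'v \<Rightarrow> 'v) \<Rightarrow> bool" where
  "nilpotent_lie sc br \<longleftrightarrow> (\<exists>k. lower_central_series sc br k = {0})"

definition lie_ideal :: "('k::field \<Rightarrow> 'v::ab_group_add \<Rightarrow> 'v) \<Rightarrow> ('v \<Rightarrow> 'v \<Rightarrow> 'v) \<Rightarrow> 'v set \<Rightarrow> bool" where
  "lie_ideal sc br I \<longleftrightarrow> module.subspace sc I \<and> (\<forall>x i. i \<in> I \<longrightarrow> br x i \<in> I)"

definition pure_lie :: "('k::field \<Rightarrow> 'v::ab_group_add \<Rightarrow> 'v) \<Rightarrow> ('v \<Rightarrow> 'v \<Rightarrow> 'v) \<Rightarrow> bool" where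
  "pure_lie sc br \<longleftrightarrow>
     \<not> (\<exists>I J. lie_ideal sc br I \<and> lie_ideal sc br J \<and> I \<noteq> {0} \<and>
              (\<forall>a\<in>I. \<forall>b\<in>I. br a b = 0) \<and>
              I \<inter> J = {0} \<and> (\<forall>v. \<exists>a\<in>I. \<exists>b\<in>J. v = a + b))"

definition breadth_elt :: "('k::field \<Rightarrow> 'v::ab_group_add \<Rightarrow> 'v) \<Rightarrow> ('v \<Rightarrow> 'v \<Rightarrow> 'v) \<Rightarrow> 'v \<Rightarrow> nat" where
  "breadth_elt sc br x = vector_space.dim sc (range (br x))"

definition breadth :: "('k::field \<Rightarrow> 'v::ab_group_add \<Rightarrow> 'v) \<Rightarrow> ('v \<Rightarrow> 'v \<Rightarrow> 'v) \<Rightarrow> nat" where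
  "breadth sc br = Max (range (breadth_elt sc br))"

end

theory Submission
  imports Defs
begin

text \<open>Breadth at most 1 means that every ad x has rank at most 1, so [x, z] is a multiple of any
  nonzero [x, y]. If ad x squares to zero for every x, polarization gives
  [x, [y, z]] = [y, [z, x]], and the rank condition then kills all triple brackets, so L is
  nilpotent. Otherwise some ad x acts on its image as a nonzero scalar, and rescaling gives
  [x, a] = a with a \<noteq> 0. The common centralizer of x and a is then central and complements
  the ideal spanned by x and a, so purity forces L = span {x, a}.\<close>

context module
begin

lemma span_pair: "span {u, v} = {s *s u + t *s v |s t. True}"
  by (auto simp: span_insert span_singleton diff_eq_eq add.commute)

end

context vector_space
begin

lemma independent_card_le_dim_of_finite_dim:
  assumes "finite_dim scale" and "independent A" and "A \<subseteq> S"
  shows "card A \<le> dim S"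
proof -
  obtain B where B: "finite B" "span B = UNIV"
    using assms(1) unfolding finite_dim_def by blast
  obtain C where C: "C \<subseteq> S" "independent C" "S \<subseteq> span C" "card C = dim S"
    using basis_exists by blast
  have "finite C"
    using independent_span_bound[of B C] B C by auto
  then show ?thesis
    using independent_span_bound[of C A] assms(2,3) C by auto
qed

end

definition centralizer :: "('v \<Rightarrow> 'v \<Rightarrow> 'v::zero) \<Rightarrow> 'v set \<Rightarrow> 'v set" where
  "centralizer br S = {z. \<forall>s\<in>S. br s z = 0}"

context
  fixes sc :: "'k::field \<Rightarrow> 'v::ab_group_add \<Rightarrow> 'v"
    and br :: "'v \<Rightarrow> 'v \<Rightarrow> 'v"
  assumes lie: "lie_algebra sc br"
begin

interpretation V: vector_space sc
  using lie unfolding lie_algebra_def by blast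

interpretation VV: vector_space_pair sc sc ..

lemma linear_bracket_left: "Vector_Spaces.linear sc sc (\<lambda>x. br x y)"
  using lie unfolding lie_algebra_def by blast

lemma linear_bracket_right: "Vector_Spaces.linear sc sc (br x)"
  using lie unfolding lie_algebra_def by blast

lemmas bracket_zero_left [simp] = VV.linear_0[OF linear_bracket_left]
  and bracket_zero_right [simp] = VV.linear_0[OF linear_bracket_right]

lemmas bracket_bilinear =
  VV.linear_add[OF linear_bracket_left] VV.linear_add[OF linear_bracket_right]
  VV.linear_scale[OF linear_bracket_left] VV.linear_scale[OF linear_bracket_right]
  VV.linear_neg[OF linear_bracket_left] VV.linear_neg[OF linear_bracket_right]
  VV.linear_diff[OF linear_bracket_left] VV.linear_diff[OF linear_bracket_right]

lemma bracket_self [simp]: "br x x = 0"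
  using lie unfolding lie_algebra_def by blast

lemma jacobi: "br x (br y z) + br y (br z x) + br z (br x y) = 0"
  using lie unfolding lie_algebra_def by blast

lemma bracket_antisym: "br x y = - br y x"
proof -
  have "br x y + br y x = 0"
    using bracket_self[of "x + y"] unfolding bracket_bilinear by (simp add: add.commute)
  then show ?thesis
    by (simp add: eq_neg_iff_add_eq_0)
qed

lemma breadth_elt_le_breadth:
  assumes "finite_dim sc"
  shows "breadth_elt sc br x \<le> breadth sc br"
proof -
  obtain B where "finite B" "V.span B = UNIV"
    using assms unfolding finite_dim_def by blast
  then have "range (breadth_elt sc br) \<subseteq> {..card B}"
    unfolding breadth_elt_def using V.dim_le_card by auto
  then show ?thesis
    unfolding breadth_def by (meson Max_ge finite_atMost finite_subset rangeI)
qed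

lemma lie_ideal_span:
  assumes "\<And>v s. s \<in> S \<Longrightarrow> br v s \<in> V.span S"
  shows "lie_ideal sc br (V.span S)"
  unfolding lie_ideal_def
proof (intro conjI allI impI)
  show "V.subspace (V.span S)"
    by simp
  fix v i
  assume "i \<in> V.span S"
  then have "br v i \<in> br v ` V.span S"
    by blast
  also have "\<dots> = V.span (br v ` S)"
    by (rule VV.linear_span_image[OF linear_bracket_right, symmetric])
  also have "\<dots> \<subseteq> V.span S"
    using assms by (intro V.span_minimal) auto
  finally show "br v i \<in> V.span S" .
qed

lemma pure_central_direct_summand_eq_zero:
  assumes "pure_lie sc br" and "V.subspace K" and central: "\<And>v k. k \<in> K \<Longrightarrow> br v k = 0"
    and "lie_ideal sc br J" and "K \<inter> J = {0}" and "\<forall>v. \<exists>k\<in>K. \<exists>j\<in>J. v = k + j"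
  shows "K = {0}"
proof -
  have "lie_ideal sc br K"
    unfolding lie_ideal_def using assms(2) central V.subspace_0 by auto
  then show ?thesis
    using assms central unfolding pure_lie_def by blast
qed

lemma ad_square_zero_cyclic:
  assumes "\<And>x y. br x (br x y) = 0"
  shows "br x (br y z) = br y (br z x)"
proof -
  have "br (x + y) (br (x + y) z) = br x (br y z) + br y (br x z)"
    using assms by (simp add: bracket_bilinear)
  then have "br x (br y z) = - br y (br x z)"
    using assms by (simp add: eq_neg_iff_add_eq_0)
  also have "\<dots> = br y (br z x)"
    by (simp add: bracket_antisym[of x z] bracket_bilinear)
  finally show ?thesis .
qed

lemma lower_central_series_2_eq_zero:
  assumes "\<And>x y z. br x (br y z) = 0"
  shows "lower_central_series sc br 2 = {0}"
proof -
  let ?G = "{br a b |a b. a \<in> UNIV \<and> b \<in> bracket_span sc br UNIV UNIV}"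
  have "br a b = 0" if "b \<in> bracket_span sc br UNIV UNIV" for a b
    using that unfolding bracket_span_def
    by (rule VV.linear_eq_0_on_span[OF linear_bracket_right, rotated]) (auto simp: assms)
  then have "?G \<subseteq> {0}"
    by blast
  then have "V.span ?G \<subseteq> V.span {0}"
    by (rule V.span_mono)
  moreover have "lower_central_series sc br 2 = V.span ?G"
    by (simp add: numeral_2_eq_2 bracket_span_def)
  ultimately show ?thesis
    using V.span_zero by auto
qed

context
  assumes fin: "finite_dim sc" and breadth_le_1: "breadth sc br \<le> 1"
begin

lemma bracket_proportional:
  assumes "br x y \<noteq> 0"
  shows "\<exists>c. br x z = sc c (br x y)"
proof (rule ccontr)
  assume not_multiple: "\<nexists>c. br x z = sc c (br x y)"
  then have distinct: "br x z \<noteq> br x y"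
    by (metis V.scale_one)
  have "V.independent {br x z, br x y}"
    using assms not_multiple by (auto simp: V.independent_insert V.span_singleton)
  then have "card {br x z, br x y} \<le> breadth_elt sc br x"
    unfolding breadth_elt_def by (rule V.independent_card_le_dim_of_finite_dim[OF fin]) auto
  then show False
    using distinct breadth_elt_le_breadth[OF fin, of x] breadth_le_1 by simp
qed

lemma triple_bracket_zero_if_ad_square_zero:
  assumes ad_square: "\<And>x y. br x (br x y) = 0"
  shows "br x (br y z) = 0"
proof (rule ccontr)
  let ?w = "br x (br y z)"
  assume w: "?w \<noteq> 0"
  have "br y (br z x) = ?w"
    by (rule ad_square_zero_cyclic[OF ad_square, symmetric])
  then obtain c where "br y z = sc c ?w"
    using bracket_proportional[of y "br z x" z] w by auto
  then have "?w = br x (sc c ?w)"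
    by (rule arg_cong)
  also have "\<dots> = 0"
    using ad_square by (simp add: bracket_bilinear)
  finally show False
    using w by contradiction
qed

lemma nilpotent_if_ad_square_zero:
  assumes "\<And>x y. br x (br x y) = 0"
  shows "nilpotent_lie sc br"
  unfolding nilpotent_lie_def
  using lower_central_series_2_eq_zero triple_bracket_zero_if_ad_square_zero[OF assms] by blast

lemma exists_ad_eigenvector_one:
  assumes "br x (br x y) \<noteq> 0"
  shows "\<exists>u a. a \<noteq> 0 \<and> br u a = a"
proof -
  have a: "br x y \<noteq> 0"
    using assms by auto
  then obtain l where l: "br x (br x y) = sc l (br x y)"
    using bracket_proportional by blast
  with assms have "l \<noteq> 0"
    by auto
  then have "br (sc (inverse l) x) (br x y) = br x y"
    using l by (simp add: bracket_bilinear)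
  with a show ?thesis
    by blast
qed

context
  fixes x a
  assumes eigen: "br x a = a" and a_nonzero: "a \<noteq> 0"
begin

lemma bracket_x_multiple: "\<exists>c. br x v = sc c a"
  using bracket_proportional[of x a v] eigen a_nonzero by simp

lemma bracket_a_multiple: "\<exists>c. br a v = sc c a"
proof -
  have "br a x = - a"
    using eigen bracket_antisym[of a x] by simp
  then obtain c where "br a v = sc c (- a)"
    using bracket_proportional[of a x v] a_nonzero by auto
  then have "br a v = sc (- c) a"
    by simp
  then show ?thesis ..
qed

lemma bracket_pair_multiple:
  assumes "s \<in> {x, a}"
  shows "\<exists>c. br v s = sc c a"
proof -
  obtain c where "br s v = sc c a"
    using assms bracket_x_multiple bracket_a_multiple by blast
  then have "br v s = sc (- c) a"
    using bracket_antisym[of v s] by simp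
  then show ?thesis ..
qed

lemma decompose_mod_centralizer: "\<exists>s t. v - (sc s x + sc t a) \<in> centralizer br {x, a}"
proof -
  obtain c where c: "br x v = sc c a"
    using bracket_x_multiple by blast
  obtain e where e: "br a v = sc e a"
    using bracket_a_multiple by blast
  have "br a x = - a"
    using eigen bracket_antisym[of a x] by simp
  then have "v - (sc (- e) x + sc c a) \<in> centralizer br {x, a}"
    unfolding centralizer_def using c e eigen by (simp add: bracket_bilinear)
  then show ?thesis
    by blast
qed

lemma centralizer_pair_abelian:
  assumes k1: "k1 \<in> centralizer br {x, a}" and k2: "k2 \<in> centralizer br {x, a}"
  shows "br k1 k2 = 0"
proof -
  txt \<open>ad (x + k1) still fixes a, so its rank-one image puts [k1, k2] on the line of a;
    by Jacobi, ad x kills [k1, k2], whereas it fixes a.\<close>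
  have "br (x + k1) a = a"
    using eigen k1 bracket_antisym[of k1 a] unfolding centralizer_def by (simp add: bracket_bilinear)
  then obtain c where "br (x + k1) k2 = sc c a"
    using bracket_proportional[of "x + k1" a k2] a_nonzero by auto
  then have c: "br k1 k2 = sc c a"
    using k2 unfolding centralizer_def by (simp add: bracket_bilinear)
  have "br x (br k1 k2) = 0"
    using jacobi[of x k1 k2] k1 k2 bracket_antisym[of k2 x] unfolding centralizer_def by simp
  then have "sc c a = 0"
    using c eigen by (simp add: bracket_bilinear)
  with c show ?thesis
    by simp
qed

lemma centralizer_pair_central:
  assumes k: "k \<in> centralizer br {x, a}"
  shows "br v k = 0"
proof -
  obtain s t where w: "v - (sc s x + sc t a) \<in> centralizer br {x, a}"
    using decompose_mod_centralizer by blast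
  have "br v k = br (v - (sc s x + sc t a)) k + sc s (br x k) + sc t (br a k)"
    by (simp add: bracket_bilinear)
  then show ?thesis
    using centralizer_pair_abelian[OF w k] k unfolding centralizer_def by simp
qed

lemma centralizer_inter_span_pair: "centralizer br {x, a} \<inter> V.span {x, a} = {0}"
proof (intro equalityI subsetI)
  fix z
  assume "z \<in> centralizer br {x, a} \<inter> V.span {x, a}"
  then obtain s t where z: "z = sc s x + sc t a" "br x z = 0" "br a z = 0"
    unfolding V.span_pair centralizer_def by blast
  have "br a x = - a"
    using eigen bracket_antisym[of a x] by simp
  then have "sc t a = 0" "sc s a = 0"
    using z eigen by (simp_all add: bracket_bilinear)
  then show "z \<in> {0}"
    using z a_nonzero by simp
qed (simp add: centralizer_def V.span_zero)

lemma span_pair_eq_UNIV: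
  assumes "pure_lie sc br"
  shows "V.span {x, a} = UNIV"
proof -
  have "V.subspace (centralizer br {x, a})"
    unfolding centralizer_def by (rule V.subspaceI) (auto simp: bracket_bilinear)
  moreover have "lie_ideal sc br (V.span {x, a})"
  proof (rule lie_ideal_span)
    fix v s
    assume "s \<in> {x, a}"
    then obtain c where "br v s = sc c a"
      using bracket_pair_multiple by blast
    then show "br v s \<in> V.span {x, a}"
      by (simp add: V.span_base V.span_scale)
  qed
  moreover have "\<exists>k\<in>centralizer br {x, a}. \<exists>j\<in>V.span {x, a}. v = k + j" for v
  proof -
    obtain s t where "v - (sc s x + sc t a) \<in> centralizer br {x, a}"
      using decompose_mod_centralizer by blast
    moreover have "sc s x + sc t a \<in> V.span {x, a}"
      unfolding V.span_pair by blast
    ultimately show ?thesis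
      by (metis diff_add_cancel)
  qed
  ultimately have centralizer_zero: "centralizer br {x, a} = {0}"
    using pure_central_direct_summand_eq_zero[OF assms] centralizer_pair_central
      centralizer_inter_span_pair by blast
  have "v \<in> V.span {x, a}" for v
  proof -
    obtain s t where "v - (sc s x + sc t a) \<in> centralizer br {x, a}"
      using decompose_mod_centralizer by blast
    then have "v = sc s x + sc t a"
      using centralizer_zero by simp
    then show ?thesis
      unfolding V.span_pair by blast
  qed
  then show ?thesis
    by blast
qed

lemma basis_with_bracket_eq_left:
  assumes "pure_lie sc br"
  shows "\<exists>u w. u \<noteq> w \<and> \<not> V.dependent {u, w} \<and> V.span {u, w} = UNIV \<and> br u w = u"
proof (intro exI conjI)
  have "x \<noteq> 0"
    using eigen a_nonzero by auto
  have not_multiple: "a \<noteq> sc k (- x)" for k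
    using eigen a_nonzero by (auto simp: bracket_bilinear)
  then show "a \<noteq> - x"
    by (metis V.scale_one)
  show "\<not> V.dependent {a, - x}"
    using not_multiple \<open>x \<noteq> 0\<close> by (auto simp: V.independent_insert V.span_singleton)
  have "{x, a} \<subseteq> V.span {a, - x}"
    using V.span_base[of a "{a, - x}"] V.span_neg[OF V.span_base[of "- x" "{a, - x}"]] by auto
  then show "V.span {a, - x} = UNIV"
    using span_pair_eq_UNIV[OF assms] V.span_minimal[of "{x, a}"] by auto
  show "br a (- x) = a"
    using eigen bracket_antisym[of a x] by (simp add: bracket_bilinear)
qed

end

end

end

theorem corollary2p7:
  fixes sc :: "'k::field \<Rightarrow> 'v::ab_group_add \<Rightarrow> 'v"
    and br :: "'v \<Rightarrow> 'v \<Rightarrow> 'v"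
  assumes char: "(2::'k) \<noteq> 0"
    and lie: "lie_algebra sc br"
    and fin: "finite_dim sc"
    and pure: "pure_lie sc br"
    and nonnil: "\<not> nilpotent_lie sc br"
    and solv: "solvable_lie sc br"
    and br1: "breadth sc br = 1"
  shows "\<exists>x y. x \<noteq> y \<and> \<not> module.dependent sc {x, y} \<and> module.span sc {x, y} = UNIV
               \<and> br x y = x"
proof -
  have breadth_le_1: "breadth sc br \<le> 1"
    using br1 by simp
  show ?thesis
  proof (cases "\<forall>x y. br x (br x y) = 0")
    case True
    then have "nilpotent_lie sc br"
      using nilpotent_if_ad_square_zero[OF lie fin breadth_le_1] by blast
    with nonnil show ?thesis
      by contradiction
  next
    case False
    then obtain x a where "br x a = a" "a \<noteq> 0"
      using exists_ad_eigenvector_one[OF lie fin breadth_le_1] by blast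
    then show ?thesis
      using basis_with_bracket_eq_left[OF lie fin breadth_le_1 _ _ pure] by blast
  qed
qed

end
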